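(* For every integer $m\ge 2$, the shift graph $H_m$ belongs to $(m-1)$-CBU. Furthermore, $H_m$ has a CBU representation in which, in the first dimension (the coordinate along $e_1$), the box of the vertex $(i,j)$ projects onto the interval $[i,j]$.
   Context: The shift graph $H_m$ has as vertices the ordered pairs $(i,j)$ of integers with $1\le i<j\le m$, and two pairs $(i,j)$ and $(k,l)$ are adjacent iff $j=k$ or $l=i$. Let $e_1,\ldots,e_d$ be the standard basis of $\mathbb{R}^d$. For $d\ge 1$, a graph belongs to $d$-CBU if one can assign to each vertex an axis-parallel box (product of $d$ closed intervals of positive length) in $\mathbb{R}^d$ such that the boxes have pairwise disjoint interiors, two distinct vertices are adjacent iff their boxes intersect, and any two intersecting boxes intersect in a $(d-1)$-dimensional box orthogonal to $e_1$; such an assignment is a CBU representation. *)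

theory Defs
  imports Complex_Main
begin

definition shift_vertices :: "nat \<Rightarrow> (nat \<times> nat) set" where
  "shift_vertices m = {(i, j). 1 \<le> i \<and> i < j \<and> j \<le> m}"

definition shift_adj :: "nat \<times> nat \<Rightarrow> nat \<times> nat \<Rightarrow> bool" where
  "shift_adj p q = (snd p = fst q \<or> snd q = fst p)"

text \<open>Points of R^d are modelled as functions nat => real vanishing outside
  the coordinates 0..d-1; coordinate 0 is the direction e_1.\<close>

definition rspace :: "nat \<Rightarrow> (nat \<Rightarrow> real) set" where
  "rspace d = {x. \<forall>k\<ge>d. x k = 0}"

definition closed_box :: "nat \<Rightarrow> (nat \<Rightarrow> real) \<Rightarrow> (nat \<Rightarrow> real) \<Rightarrow> (nat \<Rightarrow> real) set" where
  "closed_box d lo hi = {x \<in> rspace d. \<forall>k<d. lo k \<le> x k \<and> x k \<le> hi k}"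

definition open_box :: "nat \<Rightarrow> (nat \<Rightarrow> real) \<Rightarrow> (nat \<Rightarrow> real) \<Rightarrow> (nat \<Rightarrow> real) set" where
  "open_box d lo hi = {x \<in> rspace d. \<forall>k<d. lo k < x k \<and> x k < hi k}"

definition orth_facet_box :: "nat \<Rightarrow> (nat \<Rightarrow> real) set \<Rightarrow> bool" where
  "orth_facet_box d S = (\<exists>c a b. (\<forall>k\<in>{1..<d}. a k < b k) \<and>
      S = {x \<in> rspace d. x 0 = c \<and> (\<forall>k\<in>{1..<d}. a k \<le> x k \<and> x k \<le> b k)})"

definition CBU_rep :: "nat \<Rightarrow> 'v set \<Rightarrow> ('v \<Rightarrow> 'v \<Rightarrow> bool)
    \<Rightarrow> ('v \<Rightarrow> nat \<Rightarrow> real) \<Rightarrow> ('v \<Rightarrow> nat \<Rightarrow> real) \<Rightarrow> bool" where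
  "CBU_rep d V adj lo hi =
     ((\<forall>v\<in>V. \<forall>k<d. lo v k < hi v k) \<and>
      (\<forall>u\<in>V. \<forall>v\<in>V. u \<noteq> v \<longrightarrow> open_box d (lo u) (hi u) \<inter> open_box d (lo v) (hi v) = {}) \<and>
      (\<forall>u\<in>V. \<forall>v\<in>V. u \<noteq> v \<longrightarrow>
          (adj u v \<longleftrightarrow> closed_box d (lo u) (hi u) \<inter> closed_box d (lo v) (hi v) \<noteq> {})) \<and>
      (\<forall>u\<in>V. \<forall>v\<in>V. u \<noteq> v \<longrightarrow> closed_box d (lo u) (hi u) \<inter> closed_box d (lo v) (hi v) \<noteq> {} \<longrightarrow>
          orth_facet_box d (closed_box d (lo u) (hi u) \<inter> closed_box d (lo v) (hi v))))"

definition in_CBU :: "nat \<Rightarrow> 'v set \<Rightarrow> ('v \<Rightarrow> 'v \<Rightarrow> bool) \<Rightarrow> bool" where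
  "in_CBU d V adj = (d \<ge> 1 \<and> (\<exists>lo hi. CBU_rep d V adj lo hi))"

end

theory Submission
  imports Defs
begin

text \<open>The box of the vertex (i,j) spans [i,j] in coordinate 0, so the boxes of adjacent
  vertices (i,j) and (j,l) meet in the hyperplane x 0 = j. Coordinate k \<ge> 1 stands for the
  value t = k+1 \<in> {2..m-1}: there the box of (i,j) spans [3,5] if i < t < j, [0,2] if t is
  i or j, and [0,5] otherwise. If the first intervals of two distinct vertices overlap in
  more than a point, an endpoint t of one lies strictly inside the other, and coordinate t-1
  separates the two boxes ([0,2] against [3,5]). Adjacent vertices never have this pattern,
  so their boxes overlap with positive length in every coordinate but the first.\<close>

lemma closed_box_Int:
  "closed_box d a b \<inter> closed_box d a' b' =
     closed_box d (\<lambda>k. max (a k) (a' k)) (\<lambda>k. min (b k) (b' k))"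
  unfolding closed_box_def by auto

lemma closed_box_eq_empty_iff: "closed_box d a b = {} \<longleftrightarrow> (\<exists>k<d. b k < a k)"
proof
  assume empty: "closed_box d a b = {}"
  have "(\<lambda>k. if k < d then a k else 0) \<in> closed_box d a b" if "\<forall>k<d. a k \<le> b k"
    using that unfolding closed_box_def rspace_def by auto
  then show "\<exists>k<d. b k < a k"
    using empty by (metis empty_iff not_le)
next
  assume "\<exists>k<d. b k < a k"
  then show "closed_box d a b = {}"
    unfolding closed_box_def by force
qed

lemma open_box_Int_eq_empty:
  assumes "k < d" "min (b k) (b' k) \<le> max (a k) (a' k)"
  shows "open_box d a b \<inter> open_box d a' b' = {}"
  using assms unfolding open_box_def by force

lemma orth_facet_box_closed_box:
  assumes "0 < d" "a 0 = b 0" "\<forall>k\<in>{1..<d}. a k < b k"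
  shows "orth_facet_box d (closed_box d a b)"
  unfolding orth_facet_box_def
proof (intro exI conjI)
  show "\<forall>k\<in>{1..<d}. a k < b k" by fact
  have "(\<forall>k<d. a k \<le> x k \<and> x k \<le> b k) \<longleftrightarrow>
      x 0 = a 0 \<and> (\<forall>k\<in>{1..<d}. a k \<le> x k \<and> x k \<le> b k)" for x
  proof -
    have "(\<forall>k<d. P k) \<longleftrightarrow> P 0 \<and> (\<forall>k\<in>{1..<d}. P k)" for P
      using assms(1) by (metis atLeastLessThan_iff less_one linorder_not_less)
    then show ?thesis
      using assms(2) by auto
  qed
  then show "closed_box d a b =
      {x \<in> rspace d. x 0 = a 0 \<and> (\<forall>k\<in>{1..<d}. a k \<le> x k \<and> x k \<le> b k)}"
    unfolding closed_box_def by blast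
qed

lemma CBU_rep_intro:
  assumes "0 < d"
    and sides: "\<forall>v\<in>V. \<forall>k<d. lo v k < hi v k"
    and touch: "\<And>u v. \<lbrakk>u \<in> V; v \<in> V; u \<noteq> v; adj u v\<rbrakk> \<Longrightarrow>
        max (lo u 0) (lo v 0) = min (hi u 0) (hi v 0) \<and>
        (\<forall>k\<in>{1..<d}. max (lo u k) (lo v k) < min (hi u k) (hi v k))"
    and separated: "\<And>u v. \<lbrakk>u \<in> V; v \<in> V; u \<noteq> v; \<not> adj u v\<rbrakk> \<Longrightarrow>
        \<exists>k<d. min (hi u k) (hi v k) < max (lo u k) (lo v k)"
  shows "CBU_rep d V adj lo hi"
proof -
  have "open_box d (lo u) (hi u) \<inter> open_box d (lo v) (hi v) = {} \<and>
      (adj u v \<longleftrightarrow> closed_box d (lo u) (hi u) \<inter> closed_box d (lo v) (hi v) \<noteq> {}) \<and>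
      (closed_box d (lo u) (hi u) \<inter> closed_box d (lo v) (hi v) \<noteq> {} \<longrightarrow>
         orth_facet_box d (closed_box d (lo u) (hi u) \<inter> closed_box d (lo v) (hi v)))"
    if uv: "u \<in> V" "v \<in> V" "u \<noteq> v" for u v
  proof (cases "adj u v")
    case True
    note meet = touch[OF uv True]
    have "max (lo u k) (lo v k) \<le> min (hi u k) (hi v k)" if "k < d" for k
    proof (cases "k = 0")
      case False
      then have "k \<in> {1..<d}"
        using that by simp
      then show ?thesis
        using meet by (blast intro: less_imp_le)
    qed (use meet in simp)
    then have "\<not> (\<exists>k<d. min (hi u k) (hi v k) < max (lo u k) (lo v k))"
      by (auto simp: not_less)
    moreover have "orth_facet_box d
        (closed_box d (\<lambda>k. max (lo u k) (lo v k)) (\<lambda>k. min (hi u k) (hi v k)))"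
      using meet by (intro orth_facet_box_closed_box) (use assms(1) in auto)
    moreover have "open_box d (lo u) (hi u) \<inter> open_box d (lo v) (hi v) = {}"
      using meet by (intro open_box_Int_eq_empty[OF assms(1)]) simp
    ultimately show ?thesis
      using True by (simp add: closed_box_Int closed_box_eq_empty_iff)
  next
    case False
    then obtain k where k: "k < d" "min (hi u k) (hi v k) < max (lo u k) (lo v k)"
      using separated[OF uv] by blast
    then have "open_box d (lo u) (hi u) \<inter> open_box d (lo v) (hi v) = {}"
      by (intro open_box_Int_eq_empty) auto
    moreover have "closed_box d (lo u) (hi u) \<inter> closed_box d (lo v) (hi v) = {}"
      using k by (auto simp: closed_box_Int closed_box_eq_empty_iff)
    ultimately show ?thesis
      using False by simp
  qed
  then show ?thesis
    unfolding CBU_rep_def using sides by blast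
qed

definition shift_lo :: "nat \<times> nat \<Rightarrow> nat \<Rightarrow> real" where
  "shift_lo p k =
     (if k = 0 then real (fst p) else if fst p < Suc k \<and> Suc k < snd p then 3 else 0)"

definition shift_hi :: "nat \<times> nat \<Rightarrow> nat \<Rightarrow> real" where
  "shift_hi p k =
     (if k = 0 then real (snd p) else if Suc k = fst p \<or> Suc k = snd p then 2 else 5)"

lemma shift_lo_less_hi: "p \<in> shift_vertices m \<Longrightarrow> shift_lo p k < shift_hi p k"
  by (auto simp: shift_vertices_def shift_lo_def shift_hi_def)

lemma shift_boxes_touch:
  assumes "p \<in> shift_vertices m" "q \<in> shift_vertices m" "shift_adj p q"
  shows "max (shift_lo p 0) (shift_lo q 0) = min (shift_hi p 0) (shift_hi q 0)"
    and "0 < k \<Longrightarrow> max (shift_lo p k) (shift_lo q k) < min (shift_hi p k) (shift_hi q k)"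
  using assms by (auto simp: shift_vertices_def shift_adj_def shift_lo_def shift_hi_def)

lemma overlapping_intervals_endpoint_inside:
  fixes i j k l :: nat
  assumes "i < j" "k < l" "(i, j) \<noteq> (k, l)" "max i k < min j l"
  obtains t where "i < t" "t < j" "t = k \<or> t = l"
    | t where "k < t" "t < l" "t = i \<or> t = j"
proof (cases i k rule: linorder_cases)
  case less
  then show ?thesis
    using assms(4) by (intro that(1)[of k]) auto
next
  case greater
  then show ?thesis
    using assms(4) by (intro that(2)[of i]) auto
next
  case equal
  then consider "j < l" | "l < j"
    using assms(3) by fastforce
  then show ?thesis
  proof cases
    case 1
    then show ?thesis
      using assms(1) equal by (intro that(2)[of j]) auto
  next
    case 2
    then show ?thesis
      using assms(2) equal by (intro that(1)[of l]) auto
  qed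
qed

lemma shift_boxes_separated:
  assumes p: "p \<in> shift_vertices m" and q: "q \<in> shift_vertices m"
    and "p \<noteq> q" "\<not> shift_adj p q"
  shows "\<exists>k<m-1. min (shift_hi p k) (shift_hi q k) < max (shift_lo p k) (shift_lo q k)"
proof -
  obtain i j k l where pq: "p = (i, j)" "q = (k, l)"
    by fastforce
  have ij: "1 \<le> i" "i < j" "j \<le> m" and kl: "1 \<le> k" "k < l" "l \<le> m"
    using p q unfolding pq shift_vertices_def by auto
  show ?thesis
  proof (cases "max i k < min j l")
    case True
    have "?thesis" if "i < t" "t < j" "t = k \<or> t = l" for t
      using that ij kl unfolding pq
      by (intro exI[of _ "t - 1"]) (auto simp: shift_lo_def shift_hi_def)
    moreover have "?thesis" if "k < t" "t < l" "t = i \<or> t = j" for t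
      using that ij kl unfolding pq
      by (intro exI[of _ "t - 1"]) (auto simp: shift_lo_def shift_hi_def)
    ultimately show ?thesis
      using overlapping_intervals_endpoint_inside[of i j k l] True ij kl assms(3)
      unfolding pq by blast
  next
    case False
    moreover have "max i k \<noteq> min j l"
      using assms(4) ij kl unfolding pq shift_adj_def
      by (cases "i \<le> k"; cases "j \<le> l") (auto simp: max_def min_def)
    ultimately have "min j l < max i k"
      by linarith
    then show ?thesis
      using ij unfolding pq by (intro exI[of _ 0]) (auto simp: shift_lo_def shift_hi_def)
  qed
qed

theorem mainTheorem11:
  fixes m :: nat
  assumes "m \<ge> 2"
  shows "in_CBU (m - 1) (shift_vertices m) shift_adj \<and>
         (\<exists>lo hi. CBU_rep (m - 1) (shift_vertices m) shift_adj lo hi \<and>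
            (\<forall>i j. (i, j) \<in> shift_vertices m \<longrightarrow>
                lo (i, j) 0 = real i \<and> hi (i, j) 0 = real j))"
proof -
  have "CBU_rep (m - 1) (shift_vertices m) shift_adj shift_lo shift_hi"
  proof (rule CBU_rep_intro)
    show "0 < m - 1"
      using assms by simp
    show "\<forall>v\<in>shift_vertices m. \<forall>k<m - 1. shift_lo v k < shift_hi v k"
      using shift_lo_less_hi by blast
  qed (use shift_boxes_touch shift_boxes_separated in auto)
  moreover have "shift_lo (i, j) 0 = real i \<and> shift_hi (i, j) 0 = real j" for i j
    by (simp add: shift_lo_def shift_hi_def)
  ultimately show ?thesis
    using assms unfolding in_CBU_def by auto
qed

end
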